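(* Let $q\ge1$, $n=2^q$, and take the operator basis $\{\tilde E_\alpha\}$ of the $n\times n$ complex matrices to be the matrix units $\{n_{[ij]}\}_{1\le i,j\le n}$, indexing $\alpha$ by pairs $(i,j)$. Then there exist a density matrix $\rho$ on $\mathbb{C}^n\otimes\mathbb{C}^n$ and an operator $R=\sum_m a_m M_m^\dagger M_m$ (for some POVM $\{M_m\}$ and real numbers $a_m$) such that the tensor $A_{\alpha\beta\gamma\delta}=\mathrm{tr}\big[R(\tilde E_\alpha\otimes\tilde E_\gamma)\rho(\tilde E_\beta^\dagger\otimes\tilde E_\delta^\dagger)\big]$ is diagonal with nonzero diagonal entries, i.e. $A_{\alpha\beta\gamma\delta}=0$ whenever $(\alpha,\beta)\ne(\gamma,\delta)$, and $A_{\alpha\beta\alpha\beta}\ne0$ for all $\alpha,\beta$.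
   Context: $n_{[ij]}$ denotes the $n\times n$ matrix whose $(i,j)$ entry is $1$ and all other entries are $0$. In a two-player static quantum game, $\rho$ is the initial state shared between the two players (each holding one $\mathbb{C}^n$ factor), $\{M_m\}$ is the referee's POVM and $a_m$ the payoff to player I on outcome $m$, so that player I's payoff for chi-matrix strategies $\chi,\xi$ is $\sum_{\alpha,\beta,\gamma,\delta}\mathrm{Re}[\chi_{\alpha\beta}\xi_{\gamma\delta}A_{\alpha\beta\gamma\delta}]$. *)

theory Defs
  imports "HOL-Analysis.Analysis"
begin

text \<open>Square complex matrices indexed by a finite type 'n (so n = CARD('n));
  operators on C^n (x) C^n are matrices indexed by 'n \<times> 'n.\<close>

type_synonym ('n) cmat = "complex ^ 'n ^ 'n"

definition adj :: "complex ^ 'b ^ 'a \<Rightarrow> complex ^ 'a ^ 'b" where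
  "adj X = (\<chi> i j. cnj (X $ j $ i))"

definition tr :: "complex ^ 'a ^ 'a \<Rightarrow> complex" where
  "tr X = (\<Sum>i\<in>UNIV. X $ i $ i)"

definition kron :: "('n::finite) cmat \<Rightarrow> ('n::finite) cmat \<Rightarrow> complex ^ ('n \<times> 'n) ^ ('n \<times> 'n)" where
  "kron X Y = (\<chi> p r. X $ fst p $ fst r * Y $ snd p $ snd r)"

definition matunit :: "'n \<Rightarrow> 'n \<Rightarrow> ('n::finite) cmat" where
  "matunit i j = (\<chi> r c. if r = i \<and> c = j then 1 else 0)"

definition cinner :: "complex ^ 'a \<Rightarrow> complex ^ 'a \<Rightarrow> complex" where
  "cinner v w = (\<Sum>i\<in>UNIV. cnj (v $ i) * w $ i)"

definition density :: "complex ^ 'a ^ 'a \<Rightarrow> bool" where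
  "density \<rho> \<longleftrightarrow> adj \<rho> = \<rho>
     \<and> (\<forall>v. Im (cinner v (\<rho> *v v)) = 0 \<and> Re (cinner v (\<rho> *v v)) \<ge> 0)
     \<and> tr \<rho> = 1"

definition povm :: "nat \<Rightarrow> (nat \<Rightarrow> complex ^ 'a ^ 'a) \<Rightarrow> bool" where
  "povm K M \<longleftrightarrow> (\<Sum>m<K. adj (M m) ** M m) = mat 1"

definition payoffA :: "complex ^ ('n::finite \<times> 'n) ^ ('n \<times> 'n) \<Rightarrow> complex ^ ('n \<times> 'n) ^ ('n \<times> 'n)
    \<Rightarrow> 'n \<times> 'n \<Rightarrow> 'n \<times> 'n \<Rightarrow> 'n \<times> 'n \<Rightarrow> 'n \<times> 'n \<Rightarrow> complex" where
  "payoffA R \<rho> \<alpha> \<beta> \<gamma> \<delta> =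
     tr (R ** kron (case_prod matunit \<alpha>) (case_prod matunit \<gamma>) ** \<rho>
           ** kron (adj (case_prod matunit \<beta>)) (adj (case_prod matunit \<delta>)))"

end

theory Submission
  imports Defs
begin

text \<open>Take both the shared state and the payoff operator to be the projector
  P = |phi><phi| onto the maximally entangled vector phi = n^(-1/2) sum_a |a a>, measured by the
  POVM {P, 1 - P} with payoffs 1 and 0. For matrix units the tensor factorises as
  A_(i,j)(k,l)(i',j')(k',l') = R_(k,k'),(i,i') rho_(j,j'),(l,l'), and an entry of P vanishes exactly
  when one of its two index pairs is off the diagonal; so A is nonzero exactly when i = i',
  j = j', k = k' and l = l'.\<close>

definition matrix_unit :: "'a \<Rightarrow> 'b \<Rightarrow> complex ^ 'b ^ 'a" where
  "matrix_unit a b = (\<chi> p r. if p = a \<and> r = b then 1 else 0)"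

lemma matrix_mul_matrix_unit_component:
  "(X ** matrix_unit a b) $ x $ y = (if y = b then X $ x $ a else 0)"
proof -
  have "(X ** matrix_unit a b) $ x $ y
      = (\<Sum>k\<in>UNIV. if y = b then (if k = a then X $ x $ a else 0) else 0)"
    unfolding matrix_matrix_mult_def matrix_unit_def vec_lambda_beta by (rule sum.cong) auto
  then show ?thesis by (cases "y = b") auto
qed

lemma tr_mul_matrix_units:
  "tr (R ** matrix_unit a b ** \<rho> ** matrix_unit c d) = R $ d $ a * \<rho> $ b $ c"
proof -
  have left: "(R ** matrix_unit a b ** \<rho>) $ x $ y = R $ x $ a * \<rho> $ b $ y" for x y
  proof -
    have "(R ** matrix_unit a b ** \<rho>) $ x $ y
        = (\<Sum>k\<in>UNIV. if k = b then R $ x $ a * \<rho> $ b $ y else 0)"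
      unfolding matrix_matrix_mult_def[of "R ** matrix_unit a b"] vec_lambda_beta
      by (rule sum.cong) (auto simp: matrix_mul_matrix_unit_component)
    then show ?thesis by simp
  qed
  have "tr (R ** matrix_unit a b ** \<rho> ** matrix_unit c d)
      = (\<Sum>i\<in>UNIV. if i = d then R $ d $ a * \<rho> $ b $ c else 0)"
    unfolding tr_def by (rule sum.cong) (auto simp: matrix_mul_matrix_unit_component left)
  then show ?thesis by simp
qed

lemma kron_matunit: "kron (matunit i j) (matunit i' j') = matrix_unit (i, i') (j, j')"
  unfolding kron_def matunit_def matrix_unit_def vec_eq_iff by auto

lemma adj_matunit: "adj (matunit i j) = matunit j i"
  unfolding adj_def matunit_def vec_eq_iff by auto

lemma payoffA_eq:
  "payoffA R \<rho> (i, j) (k, l) (i', j') (k', l') = R $ (k, k') $ (i, i') * \<rho> $ (j, j') $ (l, l')"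
  unfolding payoffA_def by (simp add: adj_matunit kron_matunit tr_mul_matrix_units)

lemma adj_diff: "adj (A - B) = adj A - adj B"
  by (simp add: adj_def vec_eq_iff)

lemma adj_mat_1: "adj (mat 1 :: complex ^ 'a ^ 'a) = mat 1"
  by (simp add: adj_def vec_eq_iff mat_def)

lemma matrix_diff_ldistrib: "(A::'a::comm_ring_1^'n::finite^'m) ** (B - C) = A ** B - A ** C"
  by (simp add: matrix_matrix_mult_def vec_eq_iff sum_subtractf right_diff_distrib)

lemma matrix_diff_rdistrib: "((A::'a::comm_ring_1^'n::finite^'m) - B) ** C = A ** C - B ** C"
  by (simp add: matrix_matrix_mult_def vec_eq_iff sum_subtractf left_diff_distrib)

lemma povm_projector_complement:
  assumes "adj P = P" and "P ** P = P"
  shows "povm 2 (\<lambda>m. if m = 0 then P else mat 1 - P)"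
proof -
  have "(mat 1 - P) ** (mat 1 - P) = mat 1 - P"
    using assms(2) by (simp add: matrix_diff_ldistrib matrix_diff_rdistrib)
  then show ?thesis
    using assms by (simp add: povm_def numeral_2_eq_2 adj_diff adj_mat_1)
qed

definition outer :: "complex ^ 'a \<Rightarrow> complex ^ 'b \<Rightarrow> complex ^ 'b ^ 'a" where
  "outer u v = (\<chi> i j. u $ i * cnj (v $ j))"

lemma adj_outer: "adj (outer u v) = outer v u"
  by (simp add: adj_def outer_def vec_eq_iff)

lemma tr_outer: "tr (outer u v) = cinner v u"
  by (simp add: tr_def outer_def cinner_def mult.commute)

lemma outer_mult_vector: "outer u v *v w = (\<chi> i. u $ i * cinner v w)"
  by (simp add: outer_def cinner_def matrix_vector_mult_def vec_eq_iff sum_distrib_left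
      mult.assoc)

lemma cinner_outer_self: "cinner v (outer u u *v v) = of_real ((cmod (cinner u v))\<^sup>2)"
proof -
  have "cinner v (outer u u *v v) = cnj (cinner u v) * cinner u v"
    by (simp add: outer_mult_vector cinner_def sum_distrib_right mult.assoc mult.left_commute)
  then show ?thesis
    by (metis complex_norm_square mult.commute)
qed

lemma outer_self_idem:
  assumes "cinner u u = 1"
  shows "outer u u ** outer u u = outer u u"
proof -
  have "(outer u u ** outer u u) $ i $ j = u $ i * cinner u u * cnj (u $ j)" for i j
    by (simp add: matrix_matrix_mult_def outer_def cinner_def sum_distrib_left
        sum_distrib_right mult_ac)
  then show ?thesis
    using assms by (simp add: vec_eq_iff outer_def)
qed

lemma density_outer_self:
  assumes "cinner u u = 1"
  shows "density (outer u u)"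
  using assms by (simp add: density_def adj_outer tr_outer cinner_outer_self)

lemma sum_diagonal:
  "(\<Sum>p\<in>UNIV. if fst p = snd p then f p else 0) = (\<Sum>a\<in>UNIV. f (a, a :: 'n::finite))"
proof -
  have "(\<Sum>p\<in>UNIV. if fst p = snd p then f p else 0)
      = (\<Sum>a\<in>UNIV. \<Sum>b\<in>UNIV. if a = b then f (a, b :: 'n) else 0)"
    unfolding UNIV_Times_UNIV[symmetric] sum.cartesian_product by (rule sum.cong) auto
  then show ?thesis by simp
qed

definition max_entangled :: "complex ^ ('n::finite \<times> 'n)" where
  "max_entangled = (\<chi> p. if fst p = snd p then of_real (1 / sqrt (real CARD('n))) else 0)"

lemma cinner_max_entangled: "cinner max_entangled (max_entangled :: complex ^ ('n::finite \<times> 'n)) = 1"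
proof -
  have "cnj (max_entangled $ p) * max_entangled $ p
      = (if fst p = snd p then 1 / of_nat CARD('n) else 0)" for p :: "'n \<times> 'n"
  proof -
    have "1 / sqrt (real CARD('n)) * (1 / sqrt (real CARD('n))) = 1 / real CARD('n)"
      by simp
    then show ?thesis
      by (simp add: max_entangled_def flip: of_real_mult)
  qed
  then show ?thesis
    by (simp add: cinner_def sum_diagonal)
qed

lemma outer_max_entangled_eq_0_iff:
  "outer max_entangled max_entangled $ (k, k') $ (i, i') = 0 \<longleftrightarrow> k \<noteq> k' \<or> i \<noteq> i'"
  by (simp add: outer_def max_entangled_def)

theorem theorem3:
  fixes q :: nat
  assumes "q \<ge> 1" and "CARD('n::finite) = 2 ^ q"
  shows "\<exists>(\<rho> :: complex ^ ('n \<times> 'n) ^ ('n \<times> 'n)) (K :: nat) M (a :: nat \<Rightarrow> real).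
           density \<rho> \<and> povm K M \<and>
           (let R = (\<Sum>m<K. a m *\<^sub>R (adj (M m) ** M m)) in
             (\<forall>\<alpha> \<beta> \<gamma> \<delta>. (\<alpha>, \<beta>) \<noteq> (\<gamma>, \<delta>) \<longrightarrow> payoffA R \<rho> \<alpha> \<beta> \<gamma> \<delta> = 0) \<and>
             (\<forall>\<alpha> \<beta>. payoffA R \<rho> \<alpha> \<beta> \<alpha> \<beta> \<noteq> 0))"
proof -
  define P :: "complex ^ ('n \<times> 'n) ^ ('n \<times> 'n)" where "P = outer max_entangled max_entangled"
  define M where "M = (\<lambda>m::nat. if m = 0 then P else mat 1 - P)"
  define a where "a = (\<lambda>m::nat. if m = 0 then 1 else 0 :: real)"
  have adj_P: "adj P = P" and idem_P: "P ** P = P"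
    unfolding P_def by (simp_all add: adj_outer outer_self_idem cinner_max_entangled)
  have R: "(\<Sum>m<2. a m *\<^sub>R (adj (M m) ** M m)) = P"
    by (simp add: numeral_2_eq_2 M_def a_def adj_P idem_P)
  have "payoffA P P \<alpha> \<beta> \<gamma> \<delta> = 0 \<longleftrightarrow> (\<alpha>, \<beta>) \<noteq> (\<gamma>, \<delta>)" for \<alpha> \<beta> \<gamma> \<delta>
    by (cases \<alpha>; cases \<beta>; cases \<gamma>; cases \<delta>)
      (auto simp: payoffA_eq P_def outer_max_entangled_eq_0_iff)
  moreover have "density P" and "povm 2 M"
    using povm_projector_complement[OF adj_P idem_P]
    by (simp_all add: P_def density_outer_self cinner_max_entangled M_def)
  ultimately show ?thesis
    by (intro exI[of _ P] exI[of _ 2] exI[of _ M] exI[of _ a]) (simp add: R)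
qed

end
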